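(* Let $G$ be a $2$-connected graph which is a spanning subgraph of an $\{a,b,c,d\}$-web, and let $X=\{a,b,c,d\}\subseteq V(G)$. If $G$ does not have a $W_4(X)$-minor, then $G$ does not have a $K_{2,4}(X)$-minor.
   Context: For a graph $H$, the graph $H^+=(H,F)$ is obtained by, for each triangle $T$ of $H$, adding a new clique $F_T$ of arbitrary size with every vertex of $F_T$ joined to every vertex of $T$ (and no other vertex of $H$). An $\{a,b,c,d\}$-web is a graph $H^+$ where $H$ is planar, its outer face is bounded by a $4$-cycle with vertex set $\{a,b,c,d\}$, every internal face is a triangle, and every triangle is a face. A spanning subgraph has the same vertex set. An $H$-model in $G$ is a family $\{G_x:x\in V(H)\}$ of pairwise vertex-disjoint connected subgraphs of $G$ such that for each $xy\in E(H)$ some vertex of $G_x$ is adjacent to some vertex of $G_y$; $G$ has an $H(X)$-minor w.r.t. injective $\pi:X\to V(H)$ if there is a model with $u\in V(G_{\pi(u)})$ for all $u\in X$. $W_4$ is a $4$-cycle (rim) plus a hub adjacent to all rim vertices; a $W_4(X)$-minor is one w.r.t. some $\pi$ sending $X$ to distinct rim vertices. $K_{2,4}$ has vertices $s_1,s_2,t_1,t_2,t_3,t_4$ and edges $s_it_j$; a $K_{2,4}(X)$-minor is one w.r.t. some $\pi$ sending $X$ to distinct vertices of $\{t_1,t_2,t_3,t_4\}$. *)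

theory Defs
  imports "HOL-Analysis.Analysis"
begin

definition graph :: "'a set \<Rightarrow> 'a set set \<Rightarrow> bool" where
  "graph V E \<longleftrightarrow> finite V \<and>
     (\<forall>e\<in>E. \<exists>u v. u \<in> V \<and> v \<in> V \<and> u \<noteq> v \<and> e = {u, v})"

definition connected_on :: "'a set set \<Rightarrow> 'a set \<Rightarrow> bool" where
  "connected_on E S \<longleftrightarrow> S \<noteq> {} \<and>
     (\<forall>u\<in>S. \<forall>v\<in>S. (\<lambda>x y. x \<in> S \<and> y \<in> S \<and> {x, y} \<in> E)\<^sup>*\<^sup>* u v)"

definition two_connected :: "'a set \<Rightarrow> 'a set set \<Rightarrow> bool" where
  "two_connected V E \<longleftrightarrow> graph V E \<and> card V \<ge> 3 \<and> connected_on E V \<and>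
     (\<forall>v\<in>V. connected_on E (V - {v}))"

definition triangle :: "'a set set \<Rightarrow> 'a set \<Rightarrow> bool" where
  "triangle E T \<longleftrightarrow> (\<exists>x y z. T = {x, y, z} \<and> x \<noteq> y \<and> y \<noteq> z \<and> x \<noteq> z \<and>
      {x, y} \<in> E \<and> {y, z} \<in> E \<and> {x, z} \<in> E)"

definition tri_edges :: "'a set \<Rightarrow> 'a set set" where
  "tri_edges T = {e. e \<subseteq> T \<and> card e = 2}"

definition plane_embedding ::
  "'a set \<Rightarrow> 'a set set \<Rightarrow> ('a \<Rightarrow> complex) \<Rightarrow> ('a set \<Rightarrow> real \<Rightarrow> complex) \<Rightarrow> bool" where
  "plane_embedding V E p g \<longleftrightarrow> inj_on p V \<and>
     (\<forall>e\<in>E. arc (g e) \<and> {pathstart (g e), pathfinish (g e)} = p ` e) \<and>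
     (\<forall>e\<in>E. \<forall>e'\<in>E. e \<noteq> e' \<longrightarrow> path_image (g e) \<inter> path_image (g e') \<subseteq> p ` (e \<inter> e')) \<and>
     (\<forall>e\<in>E. \<forall>v\<in>V. v \<notin> e \<longrightarrow> p v \<notin> path_image (g e))"

definition drawing ::
  "('a \<Rightarrow> complex) \<Rightarrow> ('a set \<Rightarrow> real \<Rightarrow> complex) \<Rightarrow> 'a set \<Rightarrow> 'a set set \<Rightarrow> complex set" where
  "drawing p g S D = p ` S \<union> (\<Union>e\<in>D. path_image (g e))"

definition web_base :: "'a set \<Rightarrow> 'a set set \<Rightarrow> 'a \<Rightarrow> 'a \<Rightarrow> 'a \<Rightarrow> 'a \<Rightarrow> bool" where
  "web_base VH EH a b c d \<longleftrightarrow> graph VH EH \<and>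
    (\<exists>p g. plane_embedding VH EH p g \<and>
       (\<exists>w x y z. {w, x, y, z} = {a, b, c, d} \<and> card {a, b, c, d} = 4 \<and>
          {{w, x}, {x, y}, {y, z}, {z, w}} \<subseteq> EH \<and>
          (\<exists>f\<in>components (- drawing p g VH EH). \<not> bounded f \<and>
              frontier f = drawing p g {a, b, c, d} {{w, x}, {x, y}, {y, z}, {z, w}})) \<and>
       (\<forall>f\<in>components (- drawing p g VH EH). bounded f \<longrightarrow>
          (\<exists>T. triangle EH T \<and> frontier f = drawing p g T (tri_edges T))) \<and>
       (\<forall>T. triangle EH T \<longrightarrow>
          (\<exists>f\<in>components (- drawing p g VH EH). frontier f = drawing p g T (tri_edges T))))"

text \<open>(V,E) is an {a,b,c,d}-web H^+: for each triangle T of H a new (possibly empty) clique F T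
  is added, completely joined to T and to no other vertex of H.\<close>
definition web :: "'a set \<Rightarrow> 'a set set \<Rightarrow> 'a \<Rightarrow> 'a \<Rightarrow> 'a \<Rightarrow> 'a \<Rightarrow> bool" where
  "web V E a b c d \<longleftrightarrow> (\<exists>VH EH F. web_base VH EH a b c d \<and>
     (\<forall>T. triangle EH T \<longrightarrow> finite (F T) \<and> F T \<inter> VH = {}) \<and>
     (\<forall>T T'. triangle EH T \<longrightarrow> triangle EH T' \<longrightarrow> T \<noteq> T' \<longrightarrow> F T \<inter> F T' = {}) \<and>
     V = VH \<union> (\<Union>T\<in>{T. triangle EH T}. F T) \<and>
     E = EH \<union> (\<Union>T\<in>{T. triangle EH T}.
            {{u, v} | u v. u \<in> F T \<and> v \<in> F T \<and> u \<noteq> v} \<union> {{u, t} | u t. u \<in> F T \<and> t \<in> T}))"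

definition model :: "'a set \<Rightarrow> 'a set set \<Rightarrow> 'h set \<Rightarrow> 'h set set \<Rightarrow> ('h \<Rightarrow> 'a set) \<Rightarrow> bool" where
  "model V E VH EH B \<longleftrightarrow>
     (\<forall>x\<in>VH. B x \<subseteq> V \<and> connected_on E (B x)) \<and>
     (\<forall>x\<in>VH. \<forall>y\<in>VH. x \<noteq> y \<longrightarrow> B x \<inter> B y = {}) \<and>
     (\<forall>x y. {x, y} \<in> EH \<longrightarrow> (\<exists>u\<in>B x. \<exists>v\<in>B y. {u, v} \<in> E))"

definition rooted_minor ::
  "'a set \<Rightarrow> 'a set set \<Rightarrow> 'h set \<Rightarrow> 'h set set \<Rightarrow> 'a set \<Rightarrow> ('a \<Rightarrow> 'h) \<Rightarrow> bool" where
  "rooted_minor V E VH EH X \<pi> \<longleftrightarrow> inj_on \<pi> X \<and> \<pi> ` X \<subseteq> VH \<and>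
     (\<exists>B. model V E VH EH B \<and> (\<forall>u\<in>X. u \<in> B (\<pi> u)))"

text \<open>W4: hub 0, rim 1,2,3,4 (in cyclic order).\<close>
definition W4_V :: "nat set" where "W4_V = {0..4}"
definition W4_E :: "nat set set" where
  "W4_E = {{1,2},{2,3},{3,4},{4,1},{0,1},{0,2},{0,3},{0,4}}"

definition has_W4_minor :: "'a set \<Rightarrow> 'a set set \<Rightarrow> 'a set \<Rightarrow> bool" where
  "has_W4_minor V E X \<longleftrightarrow> (\<exists>\<pi>. \<pi> ` X \<subseteq> {1..4} \<and> rooted_minor V E W4_V W4_E X \<pi>)"

text \<open>K_{2,4}: s1 = 0, s2 = 1, t1..t4 = 2..5.\<close>
definition K24_V :: "nat set" where "K24_V = {0..5}"
definition K24_E :: "nat set set" where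
  "K24_E = {{s, t} | s t. s \<in> {0, 1} \<and> t \<in> {2..5}}"

definition has_K24_minor :: "'a set \<Rightarrow> 'a set set \<Rightarrow> 'a set \<Rightarrow> bool" where
  "has_K24_minor V E X \<longleftrightarrow> (\<exists>\<pi>. \<pi> ` X \<subseteq> {2..5} \<and> rooted_minor V E K24_V K24_E X \<pi>)"

end

theory Submission
  imports Defs "HOL-Library.Transitive_Closure_Table"
begin

text \<open>Let w, x, y, z be the outer 4-cycle of the web in cyclic order. A K_{2,4}(X)-minor links w to y
  through the branch sets of t_w, s_1, t_y and, disjointly, x to z through those of t_x, s_2, t_z.
  A vertex of an added clique F_T sees only T and F_T, so each of these walks in G can be replaced
  by a walk in H within the same vertex set. In the plane embedding of H the two resulting paths
  are disjoint arcs joining opposite corners of the Jordan curve bounding the outer face, and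
  they run inside that curve; by the theta-curve theorem such arcs must meet.\<close>

subsection \<open>Arcs in the plane\<close>

lemma ends_in_closure_path_endless:
  assumes "path q"
  shows "pathstart q \<in> closure (q ` {0<..<1})" "pathfinish q \<in> closure (q ` {0<..<1})"
proof -
  have "q ` closure {0<..<1} \<subseteq> closure (q ` {0<..<1})"
    by (rule image_closure_subset)
       (use assms in \<open>auto simp: path_def intro: continuous_on_subset closure_subset[THEN subsetD]\<close>)
  then show "pathstart q \<in> closure (q ` {0<..<1})" "pathfinish q \<in> closure (q ` {0<..<1})"
    unfolding pathstart_def pathfinish_def by auto
qed

lemma closure_inside_subset:
  fixes S :: "'a::real_normed_vector set"
  assumes "closed S"
  shows "closure (inside S) \<subseteq> inside S \<union> S"
  using closure_Un_frontier[of "inside S"] frontier_inside_subset[OF assms] by blast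

lemma arcs_across_theta_intersect:
  fixes c1 c2 q1 q2 :: "real \<Rightarrow> complex"
  assumes arcs: "arc c1" "arc c2" "arc q1" "arc q2"
    and ends: "pathstart c1 = A" "pathfinish c1 = B" "pathstart c2 = A" "pathfinish c2 = B"
      "pathstart q1 = A" "pathfinish q1 = B" "pathstart q2 = X" "pathfinish q2 = Z"
    and "A \<noteq> B"
    and c1c2: "path_image c1 \<inter> path_image c2 = {A, B}"
    and c1q1: "path_image c1 \<inter> path_image q1 = {A, B}"
    and c2q1: "path_image c2 \<inter> path_image q1 = {A, B}"
    and X: "X \<in> path_image c1 - {A, B}" and Z: "Z \<in> path_image c2 - {A, B}"
    and q1_in: "path_image q1 - {A, B} \<subseteq> inside (path_image c1 \<union> path_image c2)"
    and q2_in: "path_image q2 - {X, Z} \<subseteq> inside (path_image c1 \<union> path_image c2)"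
  shows "path_image q1 \<inter> path_image q2 \<noteq> {}"
proof
  \<comment> \<open>q1 splits the inside into two regions; the connected interior of q2 lies in one of them,
    whose closure misses one end of q2.\<close>
  assume q1q2: "path_image q1 \<inter> path_image q2 = {}"
  let ?I = "inside (path_image c1 \<union> path_image c2)"
  define J1 where "J1 = inside (path_image c1 \<union> path_image q1)"
  define J2 where "J2 = inside (path_image c2 \<union> path_image q1)"
  have simple: "simple_path c1" "simple_path c2" "simple_path q1" "simple_path q2"
    using arcs by (simp_all add: arc_imp_simple_path)
  have "path_image q1 \<inter> ?I \<noteq> {}"
    using nonempty_simple_path_endless[OF simple(3)] q1_in unfolding ends(5,6) by blast
  then obtain J12: "J1 \<inter> J2 = {}" and J12_I: "J1 \<union> J2 \<union> (path_image q1 - {A, B}) = ?I"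
    unfolding J1_def J2_def
    by (rule split_inside_simple_closed_curve[OF simple(1) ends(1,2) simple(2) ends(3,4)
          simple(3) ends(5,6) \<open>A \<noteq> B\<close> c1c2 c1q1 c2q1])
  have closed: "closed (path_image c1 \<union> path_image q1)" "closed (path_image c2 \<union> path_image q1)"
    using arcs by (simp_all add: closed_Un closed_path_image arc_imp_path)
  define M where "M = path_image q2 - {X, Z}"
  have "connected M"
    unfolding M_def using connected_simple_path_endless[OF simple(4)] ends by simp
  moreover have "M \<subseteq> J1 \<union> J2"
    using q2_in q1q2 J12_I unfolding M_def by blast
  moreover have "open J1" "open J2"
    unfolding J1_def J2_def using closed by (simp_all add: open_inside)
  ultimately have "M \<subseteq> J1 \<or> M \<subseteq> J2"
    using connectedD[of M J1 J2] J12 by blast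
  moreover have "X \<in> closure M" "Z \<in> closure M"
    using ends_in_closure_path_endless[OF arc_imp_path[OF arcs(4)]] simple_path_endless[OF simple(4)]
    unfolding M_def ends by simp_all
  moreover have "X \<notin> closure J2"
  proof -
    have "X \<notin> path_image c2 \<union> path_image q1" using X c1c2 c1q1 by blast
    moreover have "X \<notin> ?I" using X inside_no_overlap[of "path_image c1 \<union> path_image c2"] by blast
    then have "X \<notin> J2" using J12_I by blast
    ultimately show ?thesis using closure_inside_subset[OF closed(2)] unfolding J2_def by blast
  qed
  moreover have "Z \<notin> closure J1"
  proof -
    have "Z \<notin> path_image c1 \<union> path_image q1" using Z c1c2 c2q1 by blast
    moreover have "Z \<notin> ?I" using Z inside_no_overlap[of "path_image c1 \<union> path_image c2"] by blast
    then have "Z \<notin> J1" using J12_I by blast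
    ultimately show ?thesis using closure_inside_subset[OF closed(1)] unfolding J1_def by blast
  qed
  ultimately show False
    by (meson closure_mono subsetD)
qed

lemma inside_frontier_of_unbounded_component:
  fixes D f :: "'a::euclidean_space set"
  assumes f: "f \<in> components (- D)" "\<not> bounded f"
    and K: "bounded (frontier f)" "frontier f \<subseteq> D" and "2 \<le> DIM('a)"
  shows "D - frontier f \<subseteq> inside (frontier f)"
proof
  fix q assume q: "q \<in> D - frontier f"
  let ?K = "frontier f"
  show "q \<in> inside ?K"
  proof (rule ccontr)
    assume "q \<notin> inside ?K"
    then have q_out: "q \<in> outside ?K" using q inside_Un_outside by blast
    have fD: "f \<subseteq> - D" using f(1) in_components_subset by blast
    have "f \<inter> outside ?K \<noteq> {}"
    proof
      assume "f \<inter> outside ?K = {}"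
      then have "f \<subseteq> inside ?K" using fD K(2) inside_Un_outside by blast
      then show False using bounded_inside[OF K(1)] f(2) bounded_subset by blast
    qed
    moreover have "outside ?K - f \<noteq> {}" using q_out q fD by blast
    moreover have "connected (outside ?K)" using connected_outside K(1) assms(5) by blast
    ultimately have "outside ?K \<inter> frontier f \<noteq> {}" using connected_Int_frontier by blast
    then show False using outside_no_overlap by blast
  qed
qed

subsection \<open>Walks and plane embeddings\<close>

abbreviation linked :: "'a set set \<Rightarrow> 'a set \<Rightarrow> 'a \<Rightarrow> 'a \<Rightarrow> bool" where
  "linked E S \<equiv> (\<lambda>x y. x \<in> S \<and> y \<in> S \<and> {x, y} \<in> E)\<^sup>*\<^sup>*"

lemma linked_ends_mem:
  assumes "linked E S u v" "u \<noteq> v"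
  shows "u \<in> S" "v \<in> S"
  using assms by (auto elim: converse_rtranclpE rtranclp.cases)

lemma linked_mono:
  assumes "linked E S u v" "S \<subseteq> S'"
  shows "linked E S' u v"
  using assms(1) by (rule rtranclp_mono[THEN predicate2D, rotated]) (use assms(2) in blast)

definition edge_arc ::
    "('a \<Rightarrow> complex) \<Rightarrow> ('a set \<Rightarrow> real \<Rightarrow> complex) \<Rightarrow> 'a \<Rightarrow> 'a \<Rightarrow> real \<Rightarrow> complex" where
  "edge_arc p g u v = (if pathstart (g {u, v}) = p u then g {u, v} else reversepath (g {u, v}))"

lemma edge_arc:
  assumes "plane_embedding V E p g" "{u, v} \<in> E"
  shows "arc (edge_arc p g u v)" "pathstart (edge_arc p g u v) = p u"
    "pathfinish (edge_arc p g u v) = p v" "path_image (edge_arc p g u v) = path_image (g {u, v})"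
proof -
  have arc: "arc (g {u, v})" and ends: "{pathstart (g {u, v}), pathfinish (g {u, v})} = {p u, p v}"
    using assms unfolding plane_embedding_def by auto
  have "pathfinish (g {u, v}) \<noteq> pathstart (g {u, v})" using arc by (rule arc_distinct_ends)
  then have "pathstart (edge_arc p g u v) = p u \<and> pathfinish (edge_arc p g u v) = p v"
    using ends unfolding edge_arc_def by (auto simp: doubleton_eq_iff)
  then show "pathstart (edge_arc p g u v) = p u" "pathfinish (edge_arc p g u v) = p v" by simp_all
  show "arc (edge_arc p g u v)" "path_image (edge_arc p g u v) = path_image (g {u, v})"
    using arc unfolding edge_arc_def by (simp_all add: arc_reversepath)
qed

lemma edge_image_ends:
  assumes "plane_embedding V E p g" "{u, v} \<in> E"
  shows "p u \<in> path_image (g {u, v})" "p v \<in> path_image (g {u, v})" "p u \<noteq> p v"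
  using pathstart_in_path_image[of "edge_arc p g u v"] pathfinish_in_path_image[of "edge_arc p g u v"]
    arc_distinct_ends[of "edge_arc p g u v"] edge_arc[OF assms] by auto

lemma edge_images_meet_at_common_ends:
  assumes "plane_embedding V E p g" "e \<in> E" "e' \<in> E" "e \<noteq> e'"
    "r \<in> path_image (g e)" "r \<in> path_image (g e')"
  shows "r \<in> p ` (e \<inter> e')"
  using assms unfolding plane_embedding_def by blast

lemma edge_image_meets_drawing_within:
  assumes "plane_embedding V E p g" "e \<in> E" "\<not> e \<subseteq> S" "r \<in> path_image (g e)"
    and "r \<in> (\<Union>e'\<in>{e' \<in> E. e' \<subseteq> S}. path_image (g e'))"
  shows "r \<in> p ` (e \<inter> S)"
proof -
  obtain e' where e': "e' \<in> E" "e' \<subseteq> S" "r \<in> path_image (g e')" using assms(5) by blast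
  have "e \<noteq> e'" using e'(2) assms(3) by blast
  then have "r \<in> p ` (e \<inter> e')"
    using edge_images_meet_at_common_ends[OF assms(1,2) e'(1)] assms(4) e'(3) by blast
  then show ?thesis using e'(2) by blast
qed

fun walk_edges :: "'a \<Rightarrow> 'a list \<Rightarrow> 'a set set" where
  "walk_edges x [] = {}"
| "walk_edges x (y # ys) = insert {x, y} (walk_edges y ys)"

lemma walk_edges_step:
  assumes "rtrancl_path R x xs y" "e \<in> walk_edges x xs"
  shows "\<exists>u v. e = {u, v} \<and> R u v \<and> u \<in> set (x # xs) \<and> v \<in> set (x # xs)"
  using assms by (induction arbitrary: e rule: rtrancl_path.induct) (auto, metis)

lemma rtrancl_path_arc:
  assumes pe: "plane_embedding V E p g" and RE: "\<And>u v. R u v \<Longrightarrow> {u, v} \<in> E"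
    and "rtrancl_path R x xs y" "distinct (x # xs)" "xs \<noteq> []"
  shows "\<exists>\<gamma>. arc \<gamma> \<and> pathstart \<gamma> = p x \<and> pathfinish \<gamma> = p y \<and>
            path_image \<gamma> = (\<Union>e\<in>walk_edges x xs. path_image (g e))"
  using assms(3-5)
proof (induction rule: rtrancl_path.induct)
  case (base x)
  then show ?case by simp
next
  case (step x y ys z)
  have xy: "{x, y} \<in> E" using RE step.hyps(1) by blast
  note first = edge_arc[OF pe xy]
  show ?case
  proof (cases "ys = []")
    case True
    then have "z = y" using step.hyps(2) by (auto elim: rtrancl_path.cases)
    then show ?thesis using first True by (intro exI[of _ "edge_arc p g x y"]) simp
  next
    case False
    then obtain \<gamma> where \<gamma>: "arc \<gamma>" "pathstart \<gamma> = p y" "pathfinish \<gamma> = p z"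
       "path_image \<gamma> = (\<Union>e\<in>walk_edges y ys. path_image (g e))"
      using step.IH step.prems by auto
    have "path_image (edge_arc p g x y) \<inter> path_image \<gamma> \<subseteq> {p y}"
    proof
      fix r assume r: "r \<in> path_image (edge_arc p g x y) \<inter> path_image \<gamma>"
      then obtain e where e: "e \<in> walk_edges y ys" "r \<in> path_image (g e)" using \<gamma>(4) by blast
      obtain u v where uv: "e = {u, v}" "R u v" "u \<in> set (y # ys)" "v \<in> set (y # ys)"
        using walk_edges_step[OF step.hyps(2) e(1)] by blast
      have "x \<notin> e" using uv step.prems(1) by auto
      then have "{x, y} \<noteq> e" by blast
      then have "r \<in> p ` ({x, y} \<inter> e)"
        using edge_images_meet_at_common_ends[OF pe xy] RE uv e(2) r first(4) by blast
      then show "r \<in> {p y}" using \<open>x \<notin> e\<close> by blast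
    qed
    then have "arc (edge_arc p g x y +++ \<gamma>)" using first \<gamma> by (intro arc_join) simp_all
    then show ?thesis
      using first \<gamma> by (intro exI[of _ "edge_arc p g x y +++ \<gamma>"]) (simp add: path_image_join)
  qed
qed

lemma linked_arc:
  assumes pe: "plane_embedding V E p g" and "linked E S u v" "u \<noteq> v"
  obtains q where "arc q" "pathstart q = p u" "pathfinish q = p v"
    "path_image q \<subseteq> (\<Union>e\<in>{e \<in> E. e \<subseteq> S}. path_image (g e))"
proof -
  let ?R = "\<lambda>x y. x \<in> S \<and> y \<in> S \<and> {x, y} \<in> E"
  obtain xs where "rtrancl_path ?R u xs v"
    using assms(2) by (auto simp: rtranclp_eq_rtrancl_path)
  then obtain xs' where xs': "rtrancl_path ?R u xs' v" "distinct (u # xs')"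
    by (rule rtrancl_path_distinct)
  have "xs' \<noteq> []" using xs'(1) \<open>u \<noteq> v\<close> by (auto elim: rtrancl_path.cases)
  then obtain q where q: "arc q" "pathstart q = p u" "pathfinish q = p v"
      "path_image q = (\<Union>e\<in>walk_edges u xs'. path_image (g e))"
    using rtrancl_path_arc[OF pe _ xs'] by blast
  have "walk_edges u xs' \<subseteq> {e \<in> E. e \<subseteq> S}"
    using walk_edges_step[OF xs'(1)] by blast
  then show thesis using q by (intro that) blast+
qed

lemma graph_edge_mem:
  assumes "graph V E" "{u, v} \<in> E"
  shows "u \<in> V" "v \<in> V"
  using assms unfolding graph_def by (auto simp: doubleton_eq_iff)

lemma two_edge_arc:
  assumes pe: "plane_embedding V E p g" and "{u, v} \<in> E" "{v, w} \<in> E" "u \<noteq> w" "u \<noteq> v"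
  shows "arc (edge_arc p g u v +++ edge_arc p g v w)"
    "pathstart (edge_arc p g u v +++ edge_arc p g v w) = p u"
    "pathfinish (edge_arc p g u v +++ edge_arc p g v w) = p w"
    "path_image (edge_arc p g u v +++ edge_arc p g v w) = path_image (g {u, v}) \<union> path_image (g {v, w})"
proof -
  note uv = edge_arc[OF pe assms(2)] and vw = edge_arc[OF pe assms(3)]
  have "{u, v} \<noteq> {v, w}" "{u, v} \<inter> {v, w} = {v}"
    using assms(4,5) by (auto simp: doubleton_eq_iff)
  then have "path_image (g {u, v}) \<inter> path_image (g {v, w}) \<subseteq> {p v}"
    using edge_images_meet_at_common_ends[OF pe assms(2,3)] by blast
  then show "arc (edge_arc p g u v +++ edge_arc p g v w)"
    using uv vw by (intro arc_join) simp_all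
  show "pathstart (edge_arc p g u v +++ edge_arc p g v w) = p u"
    "pathfinish (edge_arc p g u v +++ edge_arc p g v w) = p w"
    "path_image (edge_arc p g u v +++ edge_arc p g v w) = path_image (g {u, v}) \<union> path_image (g {v, w})"
    using uv vw by (simp_all add: path_image_join)
qed

lemma four_cycle_theta:
  assumes pe: "plane_embedding V E p g"
    and cyc: "{{w, x}, {x, y}, {y, z}, {z, w}} \<subseteq> E" and dist: "distinct [w, x, y, z]"
  obtains c1 c2 where "arc c1" "arc c2" "pathstart c1 = p w" "pathfinish c1 = p y"
    "pathstart c2 = p w" "pathfinish c2 = p y" "path_image c1 \<inter> path_image c2 = {p w, p y}"
    "path_image c1 \<union> path_image c2 = (\<Union>e\<in>{{w, x}, {x, y}, {y, z}, {z, w}}. path_image (g e))"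
    "p x \<in> path_image c1 - {p w, p y}" "p z \<in> path_image c2 - {p w, p y}"
proof -
  have edges: "{w, x} \<in> E" "{x, y} \<in> E" "{w, z} \<in> E" "{z, y} \<in> E"
    using cyc by (auto simp: insert_commute)
  have ne: "w \<noteq> y" "w \<noteq> x" "w \<noteq> z" using dist by auto
  note c1 = two_edge_arc[OF pe edges(1,2) ne(1,2)] and c2 = two_edge_arc[OF pe edges(3,4) ne(1,3)]
  let ?c1 = "edge_arc p g w x +++ edge_arc p g x y" and ?c2 = "edge_arc p g w z +++ edge_arc p g z y"
  have meet: "r \<in> p ` {w, y}"
    if "e \<in> E" "e' \<in> E" "e \<inter> e' \<subseteq> {w, y}" "e \<noteq> e'" "r \<in> path_image (g e)" "r \<in> path_image (g e')"
    for r e e'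
    using edge_images_meet_at_common_ends[OF pe that(1,2,4-6)] that(3) by blast
  have "path_image ?c1 \<inter> path_image ?c2 \<subseteq> p ` {w, y}"
  proof
    fix r assume "r \<in> path_image ?c1 \<inter> path_image ?c2"
    then obtain e e' where e: "e \<in> {{w, x}, {x, y}}" "r \<in> path_image (g e)"
      and e': "e' \<in> {{w, z}, {z, y}}" "r \<in> path_image (g e')"
      unfolding c1(4) c2(4) by blast
    have "e \<in> E" "e' \<in> E" using e(1) e'(1) edges by auto
    moreover have "x \<in> e" "e \<subseteq> {w, x, y}" "x \<notin> e'" using e(1) e'(1) dist by auto
    then have "e \<inter> e' \<subseteq> {w, y}" "e \<noteq> e'" by blast+
    ultimately show "r \<in> p ` {w, y}" using meet e(2) e'(2) by blast
  qed
  moreover have "p w \<in> path_image ?c1" "p y \<in> path_image ?c1" "p w \<in> path_image ?c2" "p y \<in> path_image ?c2"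
    using pathstart_in_path_image[of ?c1] pathfinish_in_path_image[of ?c1]
      pathstart_in_path_image[of ?c2] pathfinish_in_path_image[of ?c2] c1(2,3) c2(2,3) by simp_all
  ultimately have "path_image ?c1 \<inter> path_image ?c2 = {p w, p y}" by auto
  moreover have "path_image ?c1 \<union> path_image ?c2 = (\<Union>e\<in>{{w, x}, {x, y}, {y, z}, {z, w}}. path_image (g e))"
    unfolding c1(4) c2(4) by (auto simp: insert_commute)
  moreover have "p x \<in> path_image ?c1 - {p w, p y}" "p z \<in> path_image ?c2 - {p w, p y}"
    using edge_image_ends[OF pe edges(1)] edge_image_ends[OF pe edges(2)]
      edge_image_ends[OF pe edges(3)] edge_image_ends[OF pe edges(4)] c1(4) c2(4) by auto
  ultimately show thesis using c1 c2 by (intro that[of ?c1 ?c2])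
qed

lemma drawing_within_meets_cycle:
  assumes pe: "plane_embedding V E p g" and "C \<subseteq> E" "\<forall>e\<in>C. \<not> e \<subseteq> S"
    and "path_image q \<subseteq> (\<Union>e\<in>{e \<in> E. e \<subseteq> S}. path_image (g e))"
  shows "path_image q \<inter> (\<Union>e\<in>C. path_image (g e)) \<subseteq> p ` (\<Union>C \<inter> S)"
proof
  fix r assume r: "r \<in> path_image q \<inter> (\<Union>e\<in>C. path_image (g e))"
  then obtain e where e: "e \<in> C" "r \<in> path_image (g e)" by blast
  have "r \<in> p ` (e \<inter> S)"
    by (rule edge_image_meets_drawing_within[OF pe]) (use assms(2-4) e r in auto)
  then show "r \<in> p ` (\<Union>C \<inter> S)" using e(1) by blast
qed

lemma disjoint_linkages_arcs:
  assumes gr: "graph V E" and pe: "plane_embedding V E p g"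
    and "S1 \<inter> S2 = {}" "linked E S1 u v" "u \<noteq> v" "linked E S2 u' v'" "u' \<noteq> v'"
  obtains q1 q2 where "arc q1" "pathstart q1 = p u" "pathfinish q1 = p v"
    "path_image q1 \<subseteq> (\<Union>e\<in>{e \<in> E. e \<subseteq> S1}. path_image (g e))"
    "arc q2" "pathstart q2 = p u'" "pathfinish q2 = p v'"
    "path_image q2 \<subseteq> (\<Union>e\<in>{e \<in> E. e \<subseteq> S2}. path_image (g e))"
    "path_image q1 \<inter> path_image q2 = {}"
proof -
  let ?within = "\<lambda>S. \<Union>e\<in>{e \<in> E. e \<subseteq> S}. path_image (g e)"
  obtain q1 where q1: "arc q1" "pathstart q1 = p u" "pathfinish q1 = p v" "path_image q1 \<subseteq> ?within S1"
    using linked_arc[OF pe assms(4,5)] .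
  obtain q2 where q2: "arc q2" "pathstart q2 = p u'" "pathfinish q2 = p v'" "path_image q2 \<subseteq> ?within S2"
    using linked_arc[OF pe assms(6,7)] .
  have "e \<noteq> {}" if "e \<in> E" for e
    using gr that unfolding graph_def by blast
  then have "\<forall>e\<in>{e \<in> E. e \<subseteq> S1}. \<not> e \<subseteq> S2"
    using \<open>S1 \<inter> S2 = {}\<close> by blast
  then have "path_image q2 \<inter> ?within S1 \<subseteq> p ` (\<Union>{e \<in> E. e \<subseteq> S1} \<inter> S2)"
    by (intro drawing_within_meets_cycle[OF pe _ _ q2(4)]) auto
  also have "\<dots> = {}" using \<open>S1 \<inter> S2 = {}\<close> by blast
  finally have "path_image q1 \<inter> path_image q2 = {}" using q1(4) by blast
  with q1 q2 show thesis by (rule that)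
qed

lemma outer_four_cycle_diagonals_not_disjointly_linked:
  assumes gr: "graph V E" and pe: "plane_embedding V E p g"
    and cyc: "{{w, x}, {x, y}, {y, z}, {z, w}} \<subseteq> E" and dist: "distinct [w, x, y, z]"
    and f: "f \<in> components (- drawing p g V E)" "\<not> bounded f"
    and frontier_f: "frontier f = drawing p g {w, x, y, z} {{w, x}, {x, y}, {y, z}, {z, w}}"
    and "S1 \<inter> S2 = {}" and L1: "linked E S1 w y" and L2: "linked E S2 x z"
  shows False
proof -
  let ?C = "{{w, x}, {x, y}, {y, z}, {z, w}}"
  obtain c1 c2 where c: "arc c1" "arc c2" "pathstart c1 = p w" "pathfinish c1 = p y"
      "pathstart c2 = p w" "pathfinish c2 = p y" "path_image c1 \<inter> path_image c2 = {p w, p y}"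
      "path_image c1 \<union> path_image c2 = (\<Union>e\<in>?C. path_image (g e))"
      "p x \<in> path_image c1 - {p w, p y}" "p z \<in> path_image c2 - {p w, p y}"
    using four_cycle_theta[OF pe cyc dist] .
  define K where "K = path_image c1 \<union> path_image c2"
  have "frontier f = K"
    using c(7-10) unfolding frontier_f drawing_def K_def by auto
  moreover have "bounded K"
    unfolding K_def using c(1,2) by (simp add: bounded_path_image arc_imp_path)
  moreover have "K \<subseteq> drawing p g V E"
    unfolding K_def c(8) drawing_def using cyc by blast
  ultimately have inside: "drawing p g V E - K \<subseteq> inside K"
    using inside_frontier_of_unbounded_component[OF f] by simp
  have diagonals: "w \<noteq> y" "x \<noteq> z" using dist by auto
  obtain q1 q2 where q: "arc q1" "pathstart q1 = p w" "pathfinish q1 = p y"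
      "path_image q1 \<subseteq> (\<Union>e\<in>{e \<in> E. e \<subseteq> S1}. path_image (g e))"
      "arc q2" "pathstart q2 = p x" "pathfinish q2 = p z"
      "path_image q2 \<subseteq> (\<Union>e\<in>{e \<in> E. e \<subseteq> S2}. path_image (g e))"
      "path_image q1 \<inter> path_image q2 = {}"
    using disjoint_linkages_arcs[OF gr pe \<open>S1 \<inter> S2 = {}\<close> L1 diagonals(1) L2 diagonals(2)] .
  have "w \<in> S1" "y \<in> S1" "x \<in> S2" "z \<in> S2"
    using linked_ends_mem[OF L1 diagonals(1)] linked_ends_mem[OF L2 diagonals(2)] by auto
  then have C1: "\<Union>?C \<inter> S1 \<subseteq> {w, y}" "\<forall>e\<in>?C. \<not> e \<subseteq> S1"
    and C2: "\<Union>?C \<inter> S2 \<subseteq> {x, z}" "\<forall>e\<in>?C. \<not> e \<subseteq> S2"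
    using \<open>S1 \<inter> S2 = {}\<close> by auto
  have "path_image q1 \<inter> K \<subseteq> p ` (\<Union>?C \<inter> S1)"
    unfolding K_def c(8) by (rule drawing_within_meets_cycle[OF pe cyc C1(2) q(4)])
  with C1(1) have q1K: "path_image q1 \<inter> K \<subseteq> {p w, p y}" by blast
  have "path_image q2 \<inter> K \<subseteq> p ` (\<Union>?C \<inter> S2)"
    unfolding K_def c(8) by (rule drawing_within_meets_cycle[OF pe cyc C2(2) q(8)])
  with C2(1) have q2K: "path_image q2 \<inter> K \<subseteq> {p x, p z}" by blast
  have "path_image q1 \<subseteq> drawing p g V E" "path_image q2 \<subseteq> drawing p g V E"
    using q(4,8) unfolding drawing_def by blast+
  then have "path_image q1 - {p w, p y} \<subseteq> inside K" "path_image q2 - {p x, p z} \<subseteq> inside K"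
    using inside q1K q2K by blast+
  moreover have "path_image c1 \<inter> path_image q1 = {p w, p y}" "path_image c2 \<inter> path_image q1 = {p w, p y}"
    using q1K c(7) pathstart_in_path_image[of q1] pathfinish_in_path_image[of q1] q(2,3)
    unfolding K_def by auto
  moreover have "p w \<noteq> p y" using c(1,3,4) arc_distinct_ends by metis
  ultimately have "path_image q1 \<inter> path_image q2 \<noteq> {}"
    using c(9,10) unfolding K_def
    by (intro arcs_across_theta_intersect[OF c(1,2) q(1,5) c(3-6) q(2,3,6,7) _ c(7)]) auto
  with q(9) show False by blast
qed

subsection \<open>Cliques attached to triangles\<close>

definition triangle_clique_edges :: "'a set set \<Rightarrow> ('a set \<Rightarrow> 'a set) \<Rightarrow> 'a set set" where
  "triangle_clique_edges EH F = EH \<union> (\<Union>T\<in>{T. triangle EH T}.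
     {{u, v} | u v. u \<in> F T \<and> v \<in> F T \<and> u \<noteq> v} \<union> {{u, t} | u t. u \<in> F T \<and> t \<in> T})"

locale triangle_cliques =
  fixes VH :: "'a set" and EH :: "'a set set" and F :: "'a set \<Rightarrow> 'a set"
  assumes graph: "graph VH EH"
    and clique_outside: "triangle EH T \<Longrightarrow> F T \<inter> VH = {}"
    and cliques_disjoint: "triangle EH T \<Longrightarrow> triangle EH T' \<Longrightarrow> T \<noteq> T' \<Longrightarrow> F T \<inter> F T' = {}"
begin

abbreviation edges :: "'a set set" where "edges \<equiv> triangle_clique_edges EH F"

lemma triangle_subset: "triangle EH T \<Longrightarrow> T \<subseteq> VH"
  using graph_edge_mem[OF graph] unfolding triangle_def by blast

lemma triangle_edge: "triangle EH T \<Longrightarrow> t \<in> T \<Longrightarrow> t' \<in> T \<Longrightarrow> t \<noteq> t' \<Longrightarrow> {t, t'} \<in> EH"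
  unfolding triangle_def by (auto simp: insert_commute)

lemma edges_cases:
  assumes "{u, v} \<in> edges"
  shows "{u, v} \<in> EH \<or> (\<exists>T. triangle EH T \<and>
    (u \<in> F T \<and> v \<in> F T \<or> u \<in> F T \<and> v \<in> T \<or> v \<in> F T \<and> u \<in> T))"
  using assms unfolding triangle_clique_edges_def by (auto simp: doubleton_eq_iff)

lemma edge_end_cases: "{u, v} \<in> edges \<Longrightarrow> v \<in> VH \<or> (\<exists>T. triangle EH T \<and> v \<in> F T)"
  using edges_cases[of u v] graph_edge_mem[OF graph] triangle_subset by blast

lemma edge_within_base: "{u, v} \<in> edges \<Longrightarrow> u \<in> VH \<Longrightarrow> v \<in> VH \<Longrightarrow> {u, v} \<in> EH"
  using edges_cases[of u v] clique_outside by blast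

lemma edge_to_clique:
  assumes "{u, v} \<in> edges" "u \<in> VH" "triangle EH T" "v \<in> F T"
  shows "u \<in> T"
proof -
  have "v \<notin> VH" using clique_outside assms(3,4) by blast
  then have "{u, v} \<notin> EH" using graph_edge_mem[OF graph] by blast
  then obtain T0 where T0: "triangle EH T0"
    "u \<in> F T0 \<and> v \<in> F T0 \<or> u \<in> F T0 \<and> v \<in> T0 \<or> v \<in> F T0 \<and> u \<in> T0"
    using edges_cases[OF assms(1)] by blast
  then have "v \<in> F T0" "u \<in> T0"
    using triangle_subset[OF T0(1)] clique_outside[OF T0(1)] assms(2) \<open>v \<notin> VH\<close> by blast+
  then show "u \<in> T" using cliques_disjoint[OF T0(1) assms(3)] assms(4) by blast
qed

lemma edge_between_cliques:
  assumes "{u, v} \<in> edges" "triangle EH T" "u \<in> F T" "triangle EH T'" "v \<in> F T'"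
  shows "T = T'"
proof -
  have "u \<notin> VH" "v \<notin> VH" using clique_outside assms(2-5) by blast+
  then have "{u, v} \<notin> EH" using graph_edge_mem[OF graph] by blast
  then obtain T0 where T0: "triangle EH T0"
    "u \<in> F T0 \<and> v \<in> F T0 \<or> u \<in> F T0 \<and> v \<in> T0 \<or> v \<in> F T0 \<and> u \<in> T0"
    using edges_cases[OF assms(1)] by blast
  then have "u \<in> F T0" "v \<in> F T0"
    using triangle_subset[OF T0(1)] \<open>u \<notin> VH\<close> \<open>v \<notin> VH\<close> by blast+
  then show "T = T'"
    using cliques_disjoint[OF T0(1) assms(2)] cliques_disjoint[OF T0(1) assms(4)] assms(3,5) by blast
qed

lemma linked_projection:
  assumes "E \<subseteq> edges" "linked E S u v" "u \<in> VH" "u \<in> S"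
  shows "\<exists>t \<in> VH \<inter> S. linked EH S u t \<and> (v = t \<or> (\<exists>T. triangle EH T \<and> v \<in> F T \<and> t \<in> T))"
  using assms(2)
proof (induction rule: rtranclp_induct)
  case base
  then show ?case using assms(3,4) by blast
next
  case (step v v')
  then obtain t where t: "t \<in> VH \<inter> S" "linked EH S u t"
    and v: "v = t \<or> (\<exists>T. triangle EH T \<and> v \<in> F T \<and> t \<in> T)" by blast
  have vv': "{v, v'} \<in> edges" "{v', v} \<in> edges" "v' \<in> S"
    using step.hyps(2) assms(1) by (auto simp: insert_commute)
  consider "v' \<in> VH" | T' where "triangle EH T'" "v' \<in> F T'"
    using edge_end_cases[OF vv'(1)] by blast
  then show ?case
  proof cases
    case 1
    have "t = v' \<or> {t, v'} \<in> EH"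
      using v edge_within_base[OF vv'(1)] edge_to_clique[OF vv'(2) 1] triangle_edge t(1) 1 by blast
    then have "linked EH S u v'"
      using t vv'(3) by (auto intro: rtranclp.rtrancl_into_rtrancl)
    then show ?thesis using 1 vv'(3) by blast
  next
    case 2
    have "t \<in> T'"
      using v edge_to_clique[OF vv'(1) _ 2] edge_between_cliques[OF vv'(1) _ _ 2] t(1) by blast
    then show ?thesis using t 2 by blast
  qed
qed

lemma linked_in_base:
  assumes "E \<subseteq> edges" "linked E S u v" "u \<in> VH" "v \<in> VH" "u \<noteq> v"
  shows "linked EH S u v"
  using linked_projection[OF assms(1,2,3) linked_ends_mem(1)[OF assms(2,5)]] assms(4) clique_outside
  by blast

end

subsection \<open>Minors\<close>

lemma model_linked_through:
  assumes "model V E VH EH B" "i \<in> VH" "j \<in> VH" "k \<in> VH" "{i, j} \<in> EH" "{j, k} \<in> EH"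
    and "u \<in> B i" "v \<in> B k"
  shows "linked E (B i \<union> B j \<union> B k) u v"
proof -
  let ?S = "B i \<union> B j \<union> B k"
  have inside: "linked E ?S a b" if "l \<in> VH" "B l \<subseteq> ?S" "a \<in> B l" "b \<in> B l" for l a b
    using assms(1) that linked_mono[where S' = ?S] unfolding model_def connected_on_def by blast
  obtain u1 v1 where 1: "u1 \<in> B i" "v1 \<in> B j" "{u1, v1} \<in> E"
    using assms(1,5) unfolding model_def by blast
  obtain u2 v2 where 2: "u2 \<in> B j" "v2 \<in> B k" "{u2, v2} \<in> E"
    using assms(1,6) unfolding model_def by blast
  have "linked E ?S u u1" "linked E ?S v1 u2" "linked E ?S v2 v"
    using inside[OF assms(2)] inside[OF assms(3)] inside[OF assms(4)] 1 2 assms(7,8) by blast+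
  moreover have "linked E ?S u1 v1" "linked E ?S u2 v2" using 1 2 by auto
  ultimately show ?thesis by (meson rtranclp_trans)
qed

lemma K24_edge: "s \<in> {0, 1} \<Longrightarrow> t \<in> {2..5} \<Longrightarrow> {s, t} \<in> K24_E \<and> {t, s} \<in> K24_E"
  unfolding K24_E_def by (auto simp: insert_commute)

lemma has_K24_minor_disjoint_linkages:
  assumes "has_K24_minor V E {w, x, y, z}" "distinct [w, x, y, z]"
  obtains S1 S2 where "S1 \<inter> S2 = {}" "linked E S1 w y" "linked E S2 x z"
proof -
  obtain \<pi> B where \<pi>: "\<pi> ` {w, x, y, z} \<subseteq> {2..5}" "inj_on \<pi> {w, x, y, z}"
    and B: "model V E K24_V K24_E B" "\<forall>u\<in>{w, x, y, z}. u \<in> B (\<pi> u)"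
    using assms(1) unfolding has_K24_minor_def rooted_minor_def by blast
  have t: "\<pi> w \<in> {2..5}" "\<pi> x \<in> {2..5}" "\<pi> y \<in> {2..5}" "\<pi> z \<in> {2..5}"
    using \<pi>(1) by auto
  have s: "0 \<in> {0, 1::nat}" "1 \<in> {0, 1::nat}" by simp_all
  have "distinct [\<pi> w, \<pi> x, \<pi> y, \<pi> z]"
    using \<pi>(2) assms(2) unfolding inj_on_def by auto
  then have "distinct ([\<pi> w, 0, \<pi> y] @ [\<pi> x, 1, \<pi> z])"
    using t by auto
  then have ends_disjoint: "{\<pi> w, 0, \<pi> y} \<inter> {\<pi> x, 1, \<pi> z} = {}"
    unfolding distinct_append by simp
  have V: "{\<pi> w, 0, \<pi> y, \<pi> x, 1, \<pi> z} \<subseteq> K24_V"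
    using t unfolding K24_V_def by auto
  define S1 where "S1 = B (\<pi> w) \<union> B 0 \<union> B (\<pi> y)"
  define S2 where "S2 = B (\<pi> x) \<union> B 1 \<union> B (\<pi> z)"
  have "B i \<inter> B j = {}" if "i \<in> {\<pi> w, 0, \<pi> y}" "j \<in> {\<pi> x, 1, \<pi> z}" for i j
  proof -
    have "i \<in> K24_V" "j \<in> K24_V" "i \<noteq> j" using V ends_disjoint that by blast+
    then show ?thesis using B(1) unfolding model_def by blast
  qed
  then have "S1 \<inter> S2 = {}" unfolding S1_def S2_def by blast
  moreover have "linked E S1 w y" unfolding S1_def
    using model_linked_through[OF B(1)] V B(2) K24_edge[OF s(1) t(1)] K24_edge[OF s(1) t(3)] by simp
  moreover have "linked E S2 x z" unfolding S2_def
    using model_linked_through[OF B(1)] V B(2) K24_edge[OF s(2) t(2)] K24_edge[OF s(2) t(4)] by simp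
  ultimately show thesis by (rule that)
qed

lemma web_decompose:
  assumes "web V E a b c d"
  obtains VH EH F p g w x y z f where "triangle_cliques VH EH F" "E = triangle_clique_edges EH F"
    "plane_embedding VH EH p g" "{w, x, y, z} = {a, b, c, d}" "distinct [w, x, y, z]"
    "{{w, x}, {x, y}, {y, z}, {z, w}} \<subseteq> EH"
    "f \<in> components (- drawing p g VH EH)" "\<not> bounded f"
    "frontier f = drawing p g {w, x, y, z} {{w, x}, {x, y}, {y, z}, {z, w}}"
proof -
  obtain VH EH F where base: "web_base VH EH a b c d"
    and F: "\<forall>T. triangle EH T \<longrightarrow> finite (F T) \<and> F T \<inter> VH = {}"
      "\<forall>T T'. triangle EH T \<longrightarrow> triangle EH T' \<longrightarrow> T \<noteq> T' \<longrightarrow> F T \<inter> F T' = {}"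
    and E: "E = EH \<union> (\<Union>T\<in>{T. triangle EH T}.
            {{u, v} | u v. u \<in> F T \<and> v \<in> F T \<and> u \<noteq> v} \<union> {{u, t} | u t. u \<in> F T \<and> t \<in> T})"
    using assms unfolding web_def by blast
  obtain p g w x y z f where gr: "graph VH EH" and pe: "plane_embedding VH EH p g"
    and wxyz: "{w, x, y, z} = {a, b, c, d}" "card {a, b, c, d} = 4"
    and cyc: "{{w, x}, {x, y}, {y, z}, {z, w}} \<subseteq> EH"
    and f: "f \<in> components (- drawing p g VH EH)" "\<not> bounded f"
      "frontier f = drawing p g {a, b, c, d} {{w, x}, {x, y}, {y, z}, {z, w}}"
    using base unfolding web_base_def by (elim conjE exE bexE) (rule that, assumption+)
  have "triangle_cliques VH EH F" using gr F by unfold_locales blast+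
  moreover have "distinct [w, x, y, z]"
    using wxyz by (intro card_distinct) simp
  ultimately show thesis
    using that[OF _ _ pe wxyz(1) _ cyc f(1,2) f(3)[folded wxyz(1)]] E
    by (simp add: triangle_clique_edges_def)
qed

theorem mainTheorem18:
  fixes V :: "'a set" and E :: "'a set set" and VW :: "'a set" and EW :: "'a set set"
    and a b c d :: 'a
  assumes "two_connected V E"
    and "web VW EW a b c d"
    and "V = VW" and "E \<subseteq> EW"
    and "\<not> has_W4_minor V E {a, b, c, d}"
  shows "\<not> has_K24_minor V E {a, b, c, d}"
proof
  assume K24: "has_K24_minor V E {a, b, c, d}"
  obtain VH EH F p g w x y z f where cliques: "triangle_cliques VH EH F"
    and EW: "EW = triangle_clique_edges EH F" and pe: "plane_embedding VH EH p g"
    and wxyz: "{w, x, y, z} = {a, b, c, d}" and dist: "distinct [w, x, y, z]"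
    and cyc: "{{w, x}, {x, y}, {y, z}, {z, w}} \<subseteq> EH"
    and f: "f \<in> components (- drawing p g VH EH)" "\<not> bounded f"
      "frontier f = drawing p g {w, x, y, z} {{w, x}, {x, y}, {y, z}, {z, w}}"
    using web_decompose[OF assms(2)] .
  note gr = triangle_cliques.graph[OF cliques]
  obtain S1 S2 where "S1 \<inter> S2 = {}" "linked E S1 w y" "linked E S2 x z"
    using has_K24_minor_disjoint_linkages[OF K24[folded wxyz] dist] .
  moreover have "w \<in> VH" "x \<in> VH" "y \<in> VH" "z \<in> VH"
    using cyc graph_edge_mem[OF gr] by auto
  ultimately have "linked EH S1 w y" "linked EH S2 x z"
    using triangle_cliques.linked_in_base[OF cliques] assms(4) dist unfolding EW by auto
  then show False
    using outer_four_cycle_diagonals_not_disjointly_linked[OF gr pe cyc dist f] \<open>S1 \<inter> S2 = {}\<close>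
    by blast
qed

end
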